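(* Let $Y:(\mathbb S^{d-1})^k\to\mathbb R$ be a $k$-positive definite kernel and let $\mu\in\mathcal P(\mathbb S^{d-1})$ satisfy $I_Y(\mu)=0$. Then $\mu$ minimizes $I_Y$ over $\mathcal P(\mathbb S^{d-1})$.
   Context: $\mathbb S^{d-1}$ is the unit sphere in $\mathbb R^d$, $\mathcal P(\mathbb S^{d-1})$ its Borel probability measures, $I_Y(\mu)=\int\cdots\int Y(x_1,\ldots,x_k)\,d\mu(x_1)\cdots d\mu(x_k)$. A continuous kernel $Y$ symmetric in its first two variables is $k$-positive definite if for all fixed $z_3,\ldots,z_k\in\mathbb S^{d-1}$ and every finite signed Borel measure $\nu$ on $\mathbb S^{d-1}$, $\int\int Y(x,y,z_3,\ldots,z_k)\,d\nu(x)d\nu(y)\ge0$. *)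

theory Defs
  imports "HOL-Probability.Probability"
begin

text \<open>The unit sphere of the Euclidean space 'a (dimension d = DIM('a)).\<close>
abbreviation Sph :: "'a::euclidean_space set" where
  "Sph \<equiv> sphere 0 1"

abbreviation sphere_borel :: "'a::euclidean_space measure" where
  "sphere_borel \<equiv> restrict_space borel Sph"

abbreviation sphere_pow :: "nat \<Rightarrow> (nat \<Rightarrow> 'a::euclidean_space) set" where
  "sphere_pow k \<equiv> PiE {..<k} (\<lambda>_. Sph)"

text \<open>The argument tuple (x, y, z_3, ..., z_k) (indices 0, 1, 2, ..., k-1).\<close>
definition kargs :: "nat \<Rightarrow> 'a \<Rightarrow> 'a \<Rightarrow> (nat \<Rightarrow> 'a) \<Rightarrow> (nat \<Rightarrow> 'a)" where
  "kargs k x y z = restrict (\<lambda>i. if i = 0 then x else if i = 1 then y else z i) {..<k}"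

definition energy :: "nat \<Rightarrow> ((nat \<Rightarrow> 'a) \<Rightarrow> real) \<Rightarrow> 'a measure \<Rightarrow> real" where
  "energy k Y \<mu> = (\<integral>w. Y w \<partial>(PiM {..<k} (\<lambda>_. \<mu>)))"

definition dint :: "('a \<Rightarrow> 'a \<Rightarrow> real) \<Rightarrow> 'a measure \<Rightarrow> 'a measure \<Rightarrow> real" where
  "dint K \<nu>1 \<nu>2 = (\<integral>x. (\<integral>y. K x y \<partial>\<nu>2) \<partial>\<nu>1)"

text \<open>Double integral against the finite signed measure nu = nu_plus - nu_minus.\<close>
definition signed_dint :: "('a \<Rightarrow> 'a \<Rightarrow> real) \<Rightarrow> 'a measure \<Rightarrow> 'a measure \<Rightarrow> real" where
  "signed_dint K np nm = dint K np np - dint K np nm - dint K nm np + dint K nm nm"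

text \<open>Every finite signed Borel measure on the sphere is a
  difference of two finite (positive) Borel measures on the sphere (Jordan decomposition),
  so we quantify over such pairs.\<close>
definition k_pos_def :: "nat \<Rightarrow> ((nat \<Rightarrow> 'a::euclidean_space) \<Rightarrow> real) \<Rightarrow> bool" where
  "k_pos_def k Y \<longleftrightarrow>
     (\<forall>z \<in> PiE {2..<k} (\<lambda>_. Sph). \<forall>np nm.
        finite_measure np \<longrightarrow> sets np = sets sphere_borel \<longrightarrow>
        finite_measure nm \<longrightarrow> sets nm = sets sphere_borel \<longrightarrow>
        signed_dint (\<lambda>x y. Y (kargs k x y z)) np nm \<ge> 0)"

definition sym12_kernel :: "nat \<Rightarrow> ((nat \<Rightarrow> 'a::euclidean_space) \<Rightarrow> real) \<Rightarrow> bool" where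
  "sym12_kernel k Y \<longleftrightarrow> continuous_on (sphere_pow k) Y \<and>
     (\<forall>w \<in> sphere_pow k. Y (w(0 := w 1, 1 := w 0)) = Y w)"

end

theory Submission
  imports Defs
begin

(* A probability measure nu is a signed measure with vanishing negative part, so
   k-positive definiteness makes the double integral of Y over its first two variables
   nonnegative for every fixed z_3, ..., z_k.  Fubini then gives I_Y(nu) >= 0 for every
   probability measure nu, and a measure with I_Y(mu) = 0 is a minimizer. *)

lemma (in product_sigma_finite) product_integral_singleton_restrict:
  fixes g :: "_ \<Rightarrow> _::{banach, second_countable_topology}"
  assumes g: "g \<in> borel_measurable (Pi\<^sub>M {i} M)"
  shows "integral\<^sup>L (Pi\<^sub>M {i} M) g = (\<integral>x. g (\<lambda>l\<in>{i}. x) \<partial>M i)"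
proof -
  have "integral\<^sup>L (Pi\<^sub>M {i} M) g = (\<integral>x. g (\<lambda>l\<in>{i}. x i) \<partial>Pi\<^sub>M {i} M)"
  proof (rule Bochner_Integration.integral_cong[OF refl])
    fix x assume "x \<in> space (Pi\<^sub>M {i} M)"
    then have "x = (\<lambda>l\<in>{i}. x i)"
      by (auto simp: space_PiM PiE_def extensional_def fun_eq_iff)
    then show "g x = g (\<lambda>l\<in>{i}. x i)" by simp
  qed
  also have "\<dots> = (\<integral>x. g (\<lambda>l\<in>{i}. x) \<partial>M i)"
  proof (rule product_integral_singleton)
    have "(\<lambda>x. \<lambda>l\<in>{i}. x) \<in> measurable (M i) (Pi\<^sub>M {i} M)"
      by (rule measurable_restrict) simp
    from measurable_comp[OF this g] show "(\<lambda>x. g (\<lambda>l\<in>{i}. x)) \<in> borel_measurable (M i)"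
      by (simp add: comp_def)
  qed
  finally show ?thesis .
qed

lemma (in product_sigma_finite) product_integral_pair:
  fixes f :: "_ \<Rightarrow> _::{banach, second_countable_topology}"
  assumes ij: "i \<noteq> j" and f: "integrable (Pi\<^sub>M {i, j} M) f"
  shows "integral\<^sup>L (Pi\<^sub>M {i, j} M) f =
    (\<integral>x. (\<integral>y. f (\<lambda>l\<in>{i, j}. if l = i then x else y) \<partial>M j) \<partial>M i)"
proof -
  interpret J: finite_product_sigma_finite M "{j}" by standard simp
  let ?h = "\<lambda>x. \<integral>y. f (merge {i} {j} (x, y)) \<partial>Pi\<^sub>M {j} M"
  have ij_union: "{i} \<union> {j} = {i, j}" by auto
  have f_borel: "f \<in> borel_measurable (Pi\<^sub>M ({i} \<union> {j}) M)"
    using f unfolding ij_union by auto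
  have "integral\<^sup>L (Pi\<^sub>M {i, j} M) f = (\<integral>x. ?h x \<partial>Pi\<^sub>M {i} M)"
    using ij f product_integral_fold[of "{i}" "{j}" f] unfolding ij_union by simp
  also have "\<dots> = (\<integral>x. ?h (\<lambda>l\<in>{i}. x) \<partial>M i)"
    using measurable_comp[OF measurable_merge f_borel]
    by (intro product_integral_singleton_restrict J.borel_measurable_lebesgue_integral)
      (simp add: comp_def split_beta')
  also have "\<dots> = (\<integral>x. (\<integral>y. f (\<lambda>l\<in>{i, j}. if l = i then x else y) \<partial>M j) \<partial>M i)"
  proof (rule Bochner_Integration.integral_cong[OF refl])
    fix x assume x: "x \<in> space (M i)"
    have "(\<lambda>y. merge {i} {j} (\<lambda>l\<in>{i}. x, y)) \<in> measurable (Pi\<^sub>M {j} M) (Pi\<^sub>M ({i} \<union> {j}) M)"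
      using x by (intro measurable_compose[OF measurable_Pair1' measurable_merge]) (simp add: space_PiM)
    from measurable_comp[OF this f_borel]
    have "?h (\<lambda>l\<in>{i}. x) = (\<integral>y. f (merge {i} {j} (\<lambda>l\<in>{i}. x, \<lambda>l\<in>{j}. y)) \<partial>M j)"
      by (intro product_integral_singleton_restrict) (simp add: comp_def)
    also have "\<dots> = (\<integral>y. f (\<lambda>l\<in>{i, j}. if l = i then x else y) \<partial>M j)"
    proof -
      have "merge {i} {j} (\<lambda>l\<in>{i}. x, \<lambda>l\<in>{j}. y) = (\<lambda>l\<in>{i, j}. if l = i then x else y)" for y
        using ij by (auto simp: merge_def fun_eq_iff)
      then show ?thesis by simp
    qed
    finally show "?h (\<lambda>l\<in>{i}. x) = \<dots>" .
  qed
  finally show ?thesis .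
qed

lemma signed_dint_null_measure: "signed_dint K M (null_measure N) = dint K M M"
  by (simp add: signed_dint_def dint_def)

lemma k_pos_def_dint_nonneg:
  assumes pd: "k_pos_def k Y" and z: "z \<in> PiE {2..<k} (\<lambda>_. Sph)"
    and fin: "finite_measure \<nu>" and sets: "sets \<nu> = sets sphere_borel"
  shows "0 \<le> dint (\<lambda>x y. Y (kargs k x y z)) \<nu> \<nu>"
proof -
  have "finite_measure (null_measure (sphere_borel :: 'a measure))"
    by (rule finite_measureI) simp
  then have "0 \<le> signed_dint (\<lambda>x y. Y (kargs k x y z)) \<nu> (null_measure sphere_borel)"
    using pd z fin sets unfolding k_pos_def_def by simp
  then show ?thesis
    by (simp add: signed_dint_null_measure)
qed

lemma merge_eq_kargs:
  assumes "2 \<le> k"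
  shows "merge {2..<k} {0, 1} (z, \<lambda>l\<in>{0, 1}. if l = 0 then x else y) = kargs k x y z"
  using assms unfolding merge_def kargs_def by (auto simp: fun_eq_iff)

lemma k_pos_def_section_integral_nonneg:
  fixes Y :: "(nat \<Rightarrow> 'a::euclidean_space) \<Rightarrow> real"
  assumes k: "2 \<le> k" and pd: "k_pos_def k Y"
    and fin: "finite_measure \<nu>" and sets: "sets \<nu> = sets sphere_borel"
    and z: "z \<in> space (Pi\<^sub>M {2..<k} (\<lambda>_. \<nu>))"
  shows "0 \<le> (\<integral>w. Y (merge {2..<k} {0, 1} (z, w)) \<partial>Pi\<^sub>M {0, 1} (\<lambda>_. \<nu>))"
proof (cases "integrable (Pi\<^sub>M {0, 1} (\<lambda>_. \<nu>)) (\<lambda>w. Y (merge {2..<k} {0, 1} (z, w)))")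
  case False
  then show ?thesis by (simp add: not_integrable_integral_eq)
next
  case True
  interpret product_sigma_finite "\<lambda>_. \<nu>"
    using fin by (simp add: product_sigma_finite_def finite_measure.sigma_finite_measure)
  have "space \<nu> = Sph"
    using sets_eq_imp_space_eq[OF sets] by (simp add: space_restrict_space)
  then have z_Sph: "z \<in> PiE {2..<k} (\<lambda>_. Sph)"
    using z by (simp add: space_PiM)
  have "(\<integral>w. Y (merge {2..<k} {0, 1} (z, w)) \<partial>Pi\<^sub>M {0, 1} (\<lambda>_. \<nu>))
      = dint (\<lambda>x y. Y (kargs k x y z)) \<nu> \<nu>"
    unfolding product_integral_pair[OF zero_neq_one True] merge_eq_kargs[OF k] dint_def ..
  also have "0 \<le> \<dots>"
    by (rule k_pos_def_dint_nonneg[OF pd z_Sph fin sets])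
  finally show ?thesis .
qed

lemma energy_nonneg:
  fixes Y :: "(nat \<Rightarrow> 'a::euclidean_space) \<Rightarrow> real"
  assumes k: "2 \<le> k" and pd: "k_pos_def k Y"
    and fin: "finite_measure \<nu>" and sets: "sets \<nu> = sets sphere_borel"
  shows "0 \<le> energy k Y \<nu>"
proof (cases "integrable (Pi\<^sub>M {..<k} (\<lambda>_. \<nu>)) Y")
  case False
  then show ?thesis by (simp add: energy_def not_integrable_integral_eq)
next
  case True
  interpret product_sigma_finite "\<lambda>_. \<nu>"
    using fin by (simp add: product_sigma_finite_def finite_measure.sigma_finite_measure)
  have split: "{..<k} = {2..<k} \<union> {0, 1}"
    using k by auto
  have "energy k Y \<nu> = (\<integral>z. (\<integral>w. Y (merge {2..<k} {0, 1} (z, w)) \<partial>Pi\<^sub>M {0, 1} (\<lambda>_. \<nu>))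
      \<partial>Pi\<^sub>M {2..<k} (\<lambda>_. \<nu>))"
    unfolding energy_def split by (rule product_integral_fold) (use True split in auto)
  also have "0 \<le> \<dots>"
    using k_pos_def_section_integral_nonneg[OF k pd fin sets] by (simp add: integral_nonneg_AE)
  finally show ?thesis .
qed

theorem proposition2p6:
  fixes Y :: "(nat \<Rightarrow> 'a::euclidean_space) \<Rightarrow> real" and k :: nat
    and \<mu> :: "'a measure"
  assumes "2 \<le> k"
    and "sym12_kernel k Y"
    and "k_pos_def k Y"
    and "prob_space \<mu>" and "sets \<mu> = sets sphere_borel"
    and "energy k Y \<mu> = 0"
  shows "\<forall>\<nu>. prob_space \<nu> \<and> sets \<nu> = sets sphere_borel \<longrightarrow> energy k Y \<mu> \<le> energy k Y \<nu>"
proof (intro allI impI, elim conjE)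
  fix \<nu> :: "'a measure"
  assume "prob_space \<nu>" and "sets \<nu> = sets sphere_borel"
  then have "0 \<le> energy k Y \<nu>"
    using energy_nonneg[OF assms(1,3)] prob_space.finite_measure by blast
  with assms(6) show "energy k Y \<mu> \<le> energy k Y \<nu>"
    by simp
qed

end
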